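(* Let $A$ be a commutative ring, $S\subseteq A$ a multiplicative system, and assume that the localisation $A[S^{-1}]$ satisfies $\mathrm{AFSR}_d$. Then for any row $(b_1,\ldots,b_d)$ with entries in $A[S^{-1}]$ and any $s\in S$, there exist $c_1,\ldots,c_{d-1}\in sA$ (i.e. images in $A[S^{-1}]$ of elements $sa$, $a\in A$) such that every maximal ideal of $A[S^{-1}]$ containing the ideal $\langle b_1+c_1b_d,\ldots,b_{d-1}+c_{d-1}b_d\rangle$ already contains the ideal $\langle b_1,\ldots,b_d\rangle$.
   Context: For a commutative ring $R$ with unit group $R^*$, $R$ satisfies $\mathrm{AFSR}_d$ if for any row $(b_1,\ldots,b_d)$ with entries in $R$ there exists $c_1\in R$ such that for any $\varepsilon_1\in R^*$ there exists $c_2\in R$ such that for any $\varepsilon_2\in R^*$, \ldots, there exists $c_{d-1}\in R$ such that for any $\varepsilon_{d-1}\in R^*$, every maximal ideal of $R$ containing $\langle b_1+\varepsilon_1c_1b_d,\ldots,b_{d-1}+\varepsilon_{d-1}c_{d-1}b_d\rangle$ already contains $\langle b_1,\ldots,b_d\rangle$. *)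

theory Defs
  imports "HOL-Algebra.Algebra"
begin

definition mult_system :: "('a, 'm) ring_scheme \<Rightarrow> 'a set \<Rightarrow> bool" where
  "mult_system A S \<longleftrightarrow> S \<subseteq> carrier A \<and> \<one>\<^bsub>A\<^esub> \<in> S \<and>
     (\<forall>s\<in>S. \<forall>t\<in>S. s \<otimes>\<^bsub>A\<^esub> t \<in> S)"

text \<open>Fractions a/s are pairs (a,s); (a,s) ~ (b,t) iff u(at) = u(bs) for some u in S.\<close>
definition loc_rel :: "('a, 'm) ring_scheme \<Rightarrow> 'a set \<Rightarrow> (('a \<times> 'a) \<times> ('a \<times> 'a)) set" where
  "loc_rel A S = {((a, s), (b, t)). a \<in> carrier A \<and> b \<in> carrier A \<and> s \<in> S \<and> t \<in> S \<and>
     (\<exists>u\<in>S. u \<otimes>\<^bsub>A\<^esub> (a \<otimes>\<^bsub>A\<^esub> t) = u \<otimes>\<^bsub>A\<^esub> (b \<otimes>\<^bsub>A\<^esub> s))}"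

definition loc_class :: "('a, 'm) ring_scheme \<Rightarrow> 'a set \<Rightarrow> 'a \<times> 'a \<Rightarrow> ('a \<times> 'a) set" where
  "loc_class A S p = loc_rel A S `` {p}"

text \<open>The localisation A[S^-1]; operations are defined on representatives
  (the union over representatives is the single class, by well-definedness).\<close>
definition loc_mult :: "('a, 'm) ring_scheme \<Rightarrow> 'a set \<Rightarrow> ('a \<times> 'a) set \<Rightarrow> ('a \<times> 'a) set \<Rightarrow> ('a \<times> 'a) set" where
  "loc_mult A S U V = Union {loc_class A S (fst p \<otimes>\<^bsub>A\<^esub> fst q, snd p \<otimes>\<^bsub>A\<^esub> snd q) | p q. p \<in> U \<and> q \<in> V}"

definition loc_add :: "('a, 'm) ring_scheme \<Rightarrow> 'a set \<Rightarrow> ('a \<times> 'a) set \<Rightarrow> ('a \<times> 'a) set \<Rightarrow> ('a \<times> 'a) set" where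
  "loc_add A S U V = Union {loc_class A S (fst p \<otimes>\<^bsub>A\<^esub> snd q \<oplus>\<^bsub>A\<^esub> fst q \<otimes>\<^bsub>A\<^esub> snd p,
                         snd p \<otimes>\<^bsub>A\<^esub> snd q) | p q. p \<in> U \<and> q \<in> V}"

definition localisation :: "('a, 'm) ring_scheme \<Rightarrow> 'a set \<Rightarrow> (('a \<times> 'a) set) ring" where
  "localisation A S =
    \<lparr> carrier = (carrier A \<times> S) // loc_rel A S,
      monoid.mult = loc_mult A S,
      one = loc_class A S (\<one>\<^bsub>A\<^esub>, \<one>\<^bsub>A\<^esub>),
      ring.zero = loc_class A S (\<zero>\<^bsub>A\<^esub>, \<one>\<^bsub>A\<^esub>),
      ring.add = loc_add A S \<rparr>"

definition loc_map :: "('a, 'm) ring_scheme \<Rightarrow> 'a set \<Rightarrow> 'a \<Rightarrow> ('a \<times> 'a) set" where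
  "loc_map A S a = loc_class A S (a, \<one>\<^bsub>A\<^esub>)"

text \<open>Rows (b_1,...,b_d) are functions b with b i = b_(i+1) for i < d; so b_d = b (d-1).
  afsr_game R b d n t: n choices (c, then epsilon) remain; t i stores
  b_(i+1) + eps_(i+1) c_(i+1) b_d for the indices already chosen.
  With n remaining choices, the next index to be chosen is (d - 1) - n.\<close>
fun afsr_game :: "('b, 'm) ring_scheme \<Rightarrow> (nat \<Rightarrow> 'b) \<Rightarrow> nat \<Rightarrow> nat \<Rightarrow> (nat \<Rightarrow> 'b) \<Rightarrow> bool" where
  "afsr_game R b d 0 t =
     (\<forall>M. maximalideal M R \<longrightarrow> Idl\<^bsub>R\<^esub> (t ` {..<d - 1}) \<subseteq> M \<longrightarrow> Idl\<^bsub>R\<^esub> (b ` {..<d}) \<subseteq> M)"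
| "afsr_game R b d (Suc n) t =
     (\<exists>c\<in>carrier R. \<forall>\<epsilon>\<in>Units R.
        afsr_game R b d n (t((d - 1) - Suc n := b ((d - 1) - Suc n) \<oplus>\<^bsub>R\<^esub> \<epsilon> \<otimes>\<^bsub>R\<^esub> c \<otimes>\<^bsub>R\<^esub> b (d - 1))))"

definition AFSR :: "('b, 'm) ring_scheme \<Rightarrow> nat \<Rightarrow> bool" where
  "AFSR R d \<longleftrightarrow> (\<forall>b. (\<forall>i<d. b i \<in> carrier R) \<longrightarrow> afsr_game R b d (d - 1) (\<lambda>_. \<zero>\<^bsub>R\<^esub>))"

end

theory Submission
  imports Defs
begin

text \<open>Every fraction \<open>c = a/t\<close> becomes \<open>s a/1\<close> after multiplication by the unit \<open>s t/1\<close>.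
  Hence, in the \<open>AFSR\<^sub>d\<close> game on \<open>A[S\<^sup>-\<^sup>1]\<close>, we may answer each choice \<open>c\<^sub>i\<close> with a unit
  \<open>\<epsilon>\<^sub>i\<close> such that \<open>\<epsilon>\<^sub>i c\<^sub>i\<close> lies in the image of \<open>sA\<close>; the coefficients \<open>\<epsilon>\<^sub>i c\<^sub>i\<close> of the
  resulting play are the required \<open>c\<^sub>i\<close>.\<close>

locale comm_monoid_mult_system = comm_monoid A for A :: "('a, 'm) ring_scheme" (structure) +
  fixes S :: "'a set"
  assumes mult_system: "mult_system A S"
begin

lemma mult_system_subset: "S \<subseteq> carrier A"
  and one_in_mult_system: "\<one> \<in> S"
  and mult_system_closed: "s \<in> S \<Longrightarrow> t \<in> S \<Longrightarrow> s \<otimes> t \<in> S"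
  using mult_system unfolding mult_system_def by auto

lemma loc_rel_equiv: "equiv (carrier A \<times> S) (loc_rel A S)"
proof (rule equivI)
  show "loc_rel A S \<subseteq> (carrier A \<times> S) \<times> (carrier A \<times> S)"
    unfolding loc_rel_def by auto
  show "refl_on (carrier A \<times> S) (loc_rel A S)"
    unfolding refl_on_def loc_rel_def using one_in_mult_system by auto
  show "sym (loc_rel A S)"
    by (rule symI) (auto simp: loc_rel_def intro: sym)
  show "trans (loc_rel A S)"
  proof (rule transI)
    fix x y z assume xy: "(x, y) \<in> loc_rel A S" and yz: "(y, z) \<in> loc_rel A S"
    obtain a s b t c r where xyz: "x = (a, s)" "y = (b, t)" "z = (c, r)"
      by (cases x, cases y, cases z)
    from xy obtain u where u: "u \<in> S" "u \<otimes> (a \<otimes> t) = u \<otimes> (b \<otimes> s)"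
      and ab: "a \<in> carrier A" "b \<in> carrier A" "s \<in> S" "t \<in> S"
      unfolding xyz loc_rel_def by auto
    from yz obtain v where v: "v \<in> S" "v \<otimes> (b \<otimes> r) = v \<otimes> (c \<otimes> t)"
      and c: "c \<in> carrier A" "r \<in> S"
      unfolding xyz loc_rel_def by auto
    have carr: "s \<in> carrier A" "t \<in> carrier A" "r \<in> carrier A" "u \<in> carrier A" "v \<in> carrier A"
      using ab c u v mult_system_subset by auto
    have "(u \<otimes> v \<otimes> t) \<otimes> (a \<otimes> r) = (v \<otimes> r) \<otimes> (u \<otimes> (a \<otimes> t))"
      using ab c carr by (simp add: m_ac)
    also have "\<dots> = (u \<otimes> s) \<otimes> (v \<otimes> (b \<otimes> r))"
      using u ab c carr by (simp add: m_ac)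
    also have "\<dots> = (u \<otimes> v \<otimes> t) \<otimes> (c \<otimes> s)"
      using v ab c carr by (simp add: m_ac)
    finally show "(x, z) \<in> loc_rel A S"
      unfolding xyz loc_rel_def using ab c u v mult_system_closed by auto
  qed
qed

lemma loc_rel_mult:
  assumes "((a, s), (a', s')) \<in> loc_rel A S" and "((b, t), (b', t')) \<in> loc_rel A S"
  shows "((a \<otimes> b, s \<otimes> t), (a' \<otimes> b', s' \<otimes> t')) \<in> loc_rel A S"
proof -
  from assms(1) obtain u where u: "u \<in> S" "u \<otimes> (a \<otimes> s') = u \<otimes> (a' \<otimes> s)"
    and as: "a \<in> carrier A" "a' \<in> carrier A" "s \<in> S" "s' \<in> S"
    unfolding loc_rel_def by auto
  from assms(2) obtain v where v: "v \<in> S" "v \<otimes> (b \<otimes> t') = v \<otimes> (b' \<otimes> t)"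
    and bt: "b \<in> carrier A" "b' \<in> carrier A" "t \<in> S" "t' \<in> S"
    unfolding loc_rel_def by auto
  have carr: "s \<in> carrier A" "s' \<in> carrier A" "t \<in> carrier A" "t' \<in> carrier A"
    "u \<in> carrier A" "v \<in> carrier A"
    using as bt u v mult_system_subset by auto
  have "(u \<otimes> v) \<otimes> ((a \<otimes> b) \<otimes> (s' \<otimes> t')) = (u \<otimes> (a \<otimes> s')) \<otimes> (v \<otimes> (b \<otimes> t'))"
    using as bt carr by (simp add: m_ac)
  also have "\<dots> = (u \<otimes> v) \<otimes> ((a' \<otimes> b') \<otimes> (s \<otimes> t))"
    using u v as bt carr by (simp add: m_ac)
  finally show ?thesis
    unfolding loc_rel_def using as bt u v mult_system_closed by auto
qed

lemma loc_class_eqI: "(p, q) \<in> loc_rel A S \<Longrightarrow> loc_class A S p = loc_class A S q"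
  unfolding loc_class_def using loc_rel_equiv equiv_class_eq by metis

lemma loc_class_closed:
  "a \<in> carrier A \<Longrightarrow> t \<in> S \<Longrightarrow> loc_class A S (a, t) \<in> carrier (localisation A S)"
  unfolding localisation_def loc_class_def by (auto intro: quotientI)

lemma loc_class_cancel:
  assumes "u \<in> S" "a \<in> carrier A" "t \<in> S"
  shows "loc_class A S (u \<otimes> a, u \<otimes> t) = loc_class A S (a, t)"
proof (rule loc_class_eqI)
  have carr: "u \<in> carrier A" "t \<in> carrier A"
    using assms mult_system_subset by auto
  have "\<one> \<otimes> ((u \<otimes> a) \<otimes> t) = \<one> \<otimes> (a \<otimes> (u \<otimes> t))"
    using assms carr by (simp add: m_ac)
  then show "((u \<otimes> a, u \<otimes> t), (a, t)) \<in> loc_rel A S"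
    unfolding loc_rel_def using assms carr one_in_mult_system mult_system_closed by auto
qed

lemma loc_mult_class:
  assumes p: "p \<in> carrier A \<times> S" and q: "q \<in> carrier A \<times> S"
  shows "loc_class A S p \<otimes>\<^bsub>localisation A S\<^esub> loc_class A S q =
         loc_class A S (fst p \<otimes> fst q, snd p \<otimes> snd q)"
proof -
  have eq: "loc_class A S (fst p' \<otimes> fst q', snd p' \<otimes> snd q') =
        loc_class A S (fst p \<otimes> fst q, snd p \<otimes> snd q)"
    if "p' \<in> loc_class A S p" "q' \<in> loc_class A S q" for p' q'
  proof (rule sym, rule loc_class_eqI)
    have "(p, p') \<in> loc_rel A S" "(q, q') \<in> loc_rel A S"
      using that unfolding loc_class_def by auto
    then show "((fst p \<otimes> fst q, snd p \<otimes> snd q), (fst p' \<otimes> fst q', snd p' \<otimes> snd q')) \<in> loc_rel A S"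
      using loc_rel_mult[of "fst p" "snd p" "fst p'" "snd p'" "fst q" "snd q" "fst q'" "snd q'"]
      by simp
  qed
  have self: "p \<in> loc_class A S p" "q \<in> loc_class A S q"
    unfolding loc_class_def using equiv_class_self[OF loc_rel_equiv] p q by auto
  show ?thesis
    unfolding localisation_def monoid.simps loc_mult_def
    by (rule equalityI; use eq self in blast)
qed

lemma loc_map_Units: "t \<in> S \<Longrightarrow> loc_map A S t \<in> Units (localisation A S)"
proof -
  assume t: "t \<in> S"
  then have carr: "t \<in> carrier A"
    using mult_system_subset by auto
  have "loc_class A S (t \<otimes> \<one>, \<one> \<otimes> t) = \<one>\<^bsub>localisation A S\<^esub>"
       "loc_class A S (\<one> \<otimes> t, t \<otimes> \<one>) = \<one>\<^bsub>localisation A S\<^esub>"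
    using loc_class_cancel[OF t, of \<one> \<one>] t carr one_in_mult_system
    unfolding localisation_def by simp_all
  then show ?thesis
    unfolding Units_def loc_map_def
    using loc_class_closed loc_mult_class t carr one_in_mult_system
    by (intro CollectI conjI bexI[of _ "loc_class A S (\<one>, t)"]) auto
qed

lemma exists_Units_mult_eq_loc_map:
  assumes s: "s \<in> S" and c: "c \<in> carrier (localisation A S)"
  shows "\<exists>\<epsilon>\<in>Units (localisation A S). \<exists>a\<in>carrier A.
           \<epsilon> \<otimes>\<^bsub>localisation A S\<^esub> c = loc_map A S (s \<otimes> a)"
proof -
  from c obtain a t where a: "a \<in> carrier A" and t: "t \<in> S" and c_eq: "c = loc_class A S (a, t)"
    unfolding localisation_def loc_class_def by (auto elim!: quotientE)
  have carr: "s \<in> carrier A" "t \<in> carrier A"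
    using s t mult_system_subset by auto
  have "loc_map A S (s \<otimes> t) \<otimes>\<^bsub>localisation A S\<^esub> c = loc_class A S (t \<otimes> (s \<otimes> a), t \<otimes> \<one>)"
    unfolding loc_map_def c_eq
    using loc_mult_class s t a carr one_in_mult_system mult_system_closed by (simp add: m_ac)
  also have "\<dots> = loc_map A S (s \<otimes> a)"
    unfolding loc_map_def using loc_class_cancel[OF t _ one_in_mult_system, of "s \<otimes> a"] a carr
    by simp
  finally show ?thesis
    using loc_map_Units[OF mult_system_closed[OF s t]] a carr by blast
qed

end

text \<open>Induction invariant: the entries \<open>t i\<close> with \<open>i < d - 1 - n\<close> have been played; each
  remaining coefficient \<open>c' i\<close> is the answer \<open>\<epsilon> c\<close> to the winning choice \<open>c\<close>, so it satisfies \<open>Q\<close>.\<close>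

lemma afsr_game_unit_multiples:
  assumes unit_multiple: "\<And>c. c \<in> carrier R \<Longrightarrow> \<exists>\<epsilon>\<in>Units R. Q (\<epsilon> \<otimes>\<^bsub>R\<^esub> c)"
  shows "afsr_game R b d n t \<Longrightarrow> n \<le> d - 1 \<Longrightarrow>
    \<exists>c'. (\<forall>i<d - 1. (d - 1) - n \<le> i \<longrightarrow> Q (c' i)) \<and>
    (\<forall>M. maximalideal M R \<longrightarrow>
       Idl\<^bsub>R\<^esub> ((\<lambda>i. if i < (d - 1) - n then t i else b i \<oplus>\<^bsub>R\<^esub> c' i \<otimes>\<^bsub>R\<^esub> b (d - 1)) ` {..<d - 1}) \<subseteq> M \<longrightarrow>
       Idl\<^bsub>R\<^esub> (b ` {..<d}) \<subseteq> M)"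
proof (induction n arbitrary: t)
  case 0
  then show ?case by auto
next
  case (Suc n)
  define k where "k = (d - 1) - Suc n"
  from Suc.prems(1) obtain c where c: "c \<in> carrier R" and
    win: "\<forall>\<epsilon>\<in>Units R. afsr_game R b d n (t(k := b k \<oplus>\<^bsub>R\<^esub> \<epsilon> \<otimes>\<^bsub>R\<^esub> c \<otimes>\<^bsub>R\<^esub> b (d - 1)))"
    unfolding k_def by auto
  obtain \<epsilon> where \<epsilon>: "\<epsilon> \<in> Units R" and Q\<epsilon>: "Q (\<epsilon> \<otimes>\<^bsub>R\<^esub> c)"
    using unit_multiple[OF c] by blast
  have Suc_k: "(d - 1) - n = Suc k"
    unfolding k_def using Suc.prems(2) by auto
  obtain c' where Q: "\<forall>i<d - 1. Suc k \<le> i \<longrightarrow> Q (c' i)" and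
    M: "\<forall>M. maximalideal M R \<longrightarrow>
       Idl\<^bsub>R\<^esub> ((\<lambda>i. if i < Suc k then (t(k := b k \<oplus>\<^bsub>R\<^esub> \<epsilon> \<otimes>\<^bsub>R\<^esub> c \<otimes>\<^bsub>R\<^esub> b (d - 1))) i
         else b i \<oplus>\<^bsub>R\<^esub> c' i \<otimes>\<^bsub>R\<^esub> b (d - 1)) ` {..<d - 1}) \<subseteq> M \<longrightarrow>
       Idl\<^bsub>R\<^esub> (b ` {..<d}) \<subseteq> M"
    using Suc.IH[OF win[rule_format, OF \<epsilon>]] Suc.prems(2) Suc_k by auto
  have play: "(\<lambda>i. if i < Suc k then (t(k := b k \<oplus>\<^bsub>R\<^esub> \<epsilon> \<otimes>\<^bsub>R\<^esub> c \<otimes>\<^bsub>R\<^esub> b (d - 1))) i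
         else b i \<oplus>\<^bsub>R\<^esub> c' i \<otimes>\<^bsub>R\<^esub> b (d - 1)) =
     (\<lambda>i. if i < k then t i else b i \<oplus>\<^bsub>R\<^esub> (c'(k := \<epsilon> \<otimes>\<^bsub>R\<^esub> c)) i \<otimes>\<^bsub>R\<^esub> b (d - 1))"
    by (auto simp: less_Suc_eq)
  have "\<forall>i<d - 1. k \<le> i \<longrightarrow> Q ((c'(k := \<epsilon> \<otimes>\<^bsub>R\<^esub> c)) i)"
    using Q Q\<epsilon> by (auto simp: le_eq_less_or_eq Suc_le_eq)
  then show ?case
    using M unfolding play k_def[symmetric] by blast
qed

lemma AFSR_unit_multiples:
  assumes "AFSR R d" and "\<forall>i<d. b i \<in> carrier R"
    and "\<And>c. c \<in> carrier R \<Longrightarrow> \<exists>\<epsilon>\<in>Units R. Q (\<epsilon> \<otimes>\<^bsub>R\<^esub> c)"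
  shows "\<exists>c. (\<forall>i<d - 1. Q (c i)) \<and>
    (\<forall>M. maximalideal M R \<longrightarrow>
       Idl\<^bsub>R\<^esub> ((\<lambda>i. b i \<oplus>\<^bsub>R\<^esub> c i \<otimes>\<^bsub>R\<^esub> b (d - 1)) ` {..<d - 1}) \<subseteq> M \<longrightarrow>
       Idl\<^bsub>R\<^esub> (b ` {..<d}) \<subseteq> M)"
proof -
  have "afsr_game R b d (d - 1) (\<lambda>_. \<zero>\<^bsub>R\<^esub>)"
    using assms(1,2) unfolding AFSR_def by blast
  from afsr_game_unit_multiples[OF assms(3) this] show ?thesis by simp
qed

theorem lemma3:
  fixes A :: "('a, 'm) ring_scheme" and S :: "'a set" and d :: nat
    and b :: "nat \<Rightarrow> ('a \<times> 'a) set" and s :: 'a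
  assumes "cring A"
    and "mult_system A S"
    and "d \<ge> 1"
    and "AFSR (localisation A S) d"
    and "\<forall>i<d. b i \<in> carrier (localisation A S)"
    and "s \<in> S"
  shows "\<exists>c. (\<forall>i<d - 1. \<exists>a\<in>carrier A. c i = loc_map A S (s \<otimes>\<^bsub>A\<^esub> a)) \<and>
    (\<forall>M. maximalideal M (localisation A S) \<longrightarrow>
       Idl\<^bsub>localisation A S\<^esub> ((\<lambda>i. b i \<oplus>\<^bsub>localisation A S\<^esub> c i \<otimes>\<^bsub>localisation A S\<^esub> b (d - 1)) ` {..<d - 1}) \<subseteq> M \<longrightarrow>
       Idl\<^bsub>localisation A S\<^esub> (b ` {..<d}) \<subseteq> M)"
proof -
  have A_S: "comm_monoid_mult_system A S"
    using cring.axioms(2)[OF assms(1)] assms(2)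
    by (simp add: comm_monoid_mult_system_def comm_monoid_mult_system_axioms_def)
  show ?thesis
  proof (rule AFSR_unit_multiples[OF assms(4,5)])
    fix c assume "c \<in> carrier (localisation A S)"
    then show "\<exists>\<epsilon>\<in>Units (localisation A S).
        \<exists>a\<in>carrier A. \<epsilon> \<otimes>\<^bsub>localisation A S\<^esub> c = loc_map A S (s \<otimes>\<^bsub>A\<^esub> a)"
      by (rule comm_monoid_mult_system.exists_Units_mult_eq_loc_map[OF A_S assms(6)])
  qed
qed

end
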